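(* For every connected graph $G$ with at least two vertices, $h_1(G)\le 2\,h_2(G)+1$.
   Context: All graphs are finite, simple, undirected and connected. A configuration of $k$ agents is a $k$-tuple $(v_1,\dots,v_k)$ of pairwise distinct vertices of $G$ whose induced subgraph is connected (for $k=2$: an ordered pair of endpoints of an edge). Two configurations $(v_1,\dots,v_k)$, $(v'_1,\dots,v'_k)$ are adjacent if for every $i$ either $v_i=v'_i$ or $(v_i,v'_i)\in E$. A transition walk of length $l$ is a sequence $\mathcal C_0,\dots,\mathcal C_l$ of configurations with consecutive ones adjacent; it is spanning if every vertex of $G$ lies in some $\mathcal C_t$. $h_k(G)$ is the minimum length of a spanning transition walk with $k$ agents; $h_1(G)$ is thus the minimum length of a walk visiting all vertices. *)

theory Defs
  imports Main
begin

definition simple_graph :: "'a set \<Rightarrow> ('a \<times> 'a) set \<Rightarrow> bool" where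
  "simple_graph V E \<longleftrightarrow> finite V \<and> E \<subseteq> V \<times> V \<and> sym E \<and> (\<forall>v. (v, v) \<notin> E)"

definition induced_connected :: "('a \<times> 'a) set \<Rightarrow> 'a set \<Rightarrow> bool" where
  "induced_connected E S \<longleftrightarrow> S \<noteq> {} \<and>
     (\<forall>u\<in>S. \<forall>v\<in>S. (u, v) \<in> (E \<inter> (S \<times> S))\<^sup>*)"

definition connected_graph :: "'a set \<Rightarrow> ('a \<times> 'a) set \<Rightarrow> bool" where
  "connected_graph V E \<longleftrightarrow> simple_graph V E \<and> induced_connected E V"

definition configuration :: "'a set \<Rightarrow> ('a \<times> 'a) set \<Rightarrow> nat \<Rightarrow> 'a list \<Rightarrow> bool" where
  "configuration V E k c \<longleftrightarrow> length c = k \<and> distinct c \<and> set c \<subseteq> V \<and>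
     induced_connected E (set c)"

definition adjacent_conf :: "('a \<times> 'a) set \<Rightarrow> 'a list \<Rightarrow> 'a list \<Rightarrow> bool" where
  "adjacent_conf E c c' \<longleftrightarrow> length c = length c' \<and>
     (\<forall>i < length c. c ! i = c' ! i \<or> (c ! i, c' ! i) \<in> E)"

text \<open>A transition walk C_0, ..., C_l is a nonempty list of configurations; its length is l.\<close>
definition transition_walk :: "'a set \<Rightarrow> ('a \<times> 'a) set \<Rightarrow> nat \<Rightarrow> 'a list list \<Rightarrow> bool" where
  "transition_walk V E k W \<longleftrightarrow> W \<noteq> [] \<and> (\<forall>C \<in> set W. configuration V E k C) \<and>
     (\<forall>t < length W - 1. adjacent_conf E (W ! t) (W ! Suc t))"

definition spanning :: "'a set \<Rightarrow> 'a list list \<Rightarrow> bool" where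
  "spanning V W \<longleftrightarrow> (\<forall>v\<in>V. \<exists>C\<in>set W. v \<in> set C)"

definition h :: "'a set \<Rightarrow> ('a \<times> 'a) set \<Rightarrow> nat \<Rightarrow> nat" where
  "h V E k = (LEAST l. \<exists>W. transition_walk V E k W \<and> spanning V W \<and> length W = Suc l)"

end

theory Submission
  imports Defs
begin

text \<open>Let \<open>C\<^sub>0, \<dots>, C\<^sub>l\<close> be an optimal spanning walk of two agents.  A single agent
  can visit both vertices of every \<open>C\<^sub>t\<close>: it crosses the edge of \<open>C\<^sub>t\<close> and then
  follows the agent it has arrived at into \<open>C\<^sub>t\<^sub>+\<^sub>1\<close>.  This is a spanning walk through
  \<open>2(l + 1)\<close> configurations, i.e. of length \<open>2l + 1\<close>.  That \<open>h\<^sub>2\<close> is attained at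
  all needs some spanning two-agent walk: two agents marching in convoy along a walk
  through all vertices.\<close>

lemma transition_walk_iff:
  "transition_walk V E k W \<longleftrightarrow>
     W \<noteq> [] \<and> (\<forall>C\<in>set W. configuration V E k C) \<and> successively (adjacent_conf E) W"
  unfolding transition_walk_def successively_conv_nth by auto

lemma adjacent_conf_iff_list_all2:
  "adjacent_conf E C D \<longleftrightarrow> list_all2 (\<lambda>u v. u = v \<or> (u, v) \<in> E) C D"
  unfolding adjacent_conf_def list_all2_conv_all_nth by auto

lemma configuration_1_iff: "configuration V E 1 C \<longleftrightarrow> (\<exists>v\<in>V. C = [v])"
  by (auto simp: configuration_def induced_connected_def length_Suc_conv)

lemma configuration_2_iff:
  assumes "simple_graph V E"
  shows "configuration V E 2 C \<longleftrightarrow> (\<exists>a b. C = [a, b] \<and> (a, b) \<in> E)"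
proof
  assume conf: "configuration V E 2 C"
  then obtain a b where C: "C = [a, b]"
    by (auto simp: configuration_def numeral_2_eq_2 length_Suc_conv)
  with conf have "a \<noteq> b" and "(a, b) \<in> (E \<inter> {a, b} \<times> {a, b})\<^sup>*"
    by (auto simp: configuration_def induced_connected_def)
  then obtain z where "(a, z) \<in> E \<inter> {a, b} \<times> {a, b}"
    by (auto elim: converse_rtranclE)
  moreover have "(a, a) \<notin> E"
    using assms by (simp add: simple_graph_def)
  ultimately show "\<exists>a b. C = [a, b] \<and> (a, b) \<in> E"
    using C by blast
next
  assume "\<exists>a b. C = [a, b] \<and> (a, b) \<in> E"
  then obtain a b where C: "C = [a, b]" and ab: "(a, b) \<in> E" by blast
  with assms have "(b, a) \<in> E" "a \<noteq> b" "a \<in> V" "b \<in> V"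
    by (auto simp: simple_graph_def dest: symD)
  with C ab show "configuration V E 2 C"
    by (auto simp: configuration_def induced_connected_def)
qed

lemma h_le_length:
  assumes "transition_walk V E k W" "spanning V W"
  shows "h V E k \<le> length W - 1"
  unfolding h_def
proof (rule Least_le)
  show "\<exists>W'. transition_walk V E k W' \<and> spanning V W' \<and> length W' = Suc (length W - 1)"
    using assms by (auto simp: transition_walk_def)
qed

lemma h_attained:
  assumes "transition_walk V E k W" "spanning V W"
  obtains W' where "transition_walk V E k W'" "spanning V W'" "length W' = Suc (h V E k)"
proof -
  have "length W = Suc (length W - 1)"
    using assms(1) by (simp add: transition_walk_def)
  with assms have "\<exists>l W'. transition_walk V E k W' \<and> spanning V W' \<and> length W' = Suc l"
    by blast
  then have "\<exists>W'. transition_walk V E k W' \<and> spanning V W' \<and> length W' = Suc (h V E k)"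
    unfolding h_def by (rule LeastI_ex)
  with that show ?thesis by blast
qed

lemma rtrancl_imp_successively:
  assumes "(u, v) \<in> R\<^sup>*"
  obtains q where "successively (\<lambda>x y. (x, y) \<in> R) (u # q)" "last (u # q) = v"
proof -
  from assms have "\<exists>q. successively (\<lambda>x y. (x, y) \<in> R) (u # q) \<and> last (u # q) = v"
  proof (induction rule: converse_rtrancl_induct)
    case base
    show ?case by (intro exI[of _ "[]"]) simp
  next
    case (step y z)
    then obtain q where "successively (\<lambda>x y. (x, y) \<in> R) (z # q)" "last (z # q) = v"
      by blast
    with step.hyps(1) show ?case by (intro exI[of _ "z # q"]) simp
  qed
  with that show ?thesis by blast
qed

lemma connected_graph_covering_walk:
  assumes "connected_graph V E" "V \<noteq> {}" "finite S" "S \<subseteq> V"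
  obtains p where "p \<noteq> []" "last p \<in> V" "successively (\<lambda>x y. (x, y) \<in> E) p" "S \<subseteq> set p"
proof -
  from assms(3,4)
  have "\<exists>p. p \<noteq> [] \<and> last p \<in> V \<and> successively (\<lambda>x y. (x, y) \<in> E) p \<and> S \<subseteq> set p"
  proof (induction S rule: finite_induct)
    case empty
    from \<open>V \<noteq> {}\<close> obtain x where "x \<in> V" by blast
    then show ?case by (intro exI[of _ "[x]"]) simp
  next
    case (insert s S)
    then obtain p where p: "p \<noteq> []" "last p \<in> V"
        "successively (\<lambda>x y. (x, y) \<in> E) p" "S \<subseteq> set p"
      by auto
    from assms(1) p(2) insert.prems have "(last p, s) \<in> (E \<inter> V \<times> V)\<^sup>*"
      by (auto simp: connected_graph_def induced_connected_def)
    then obtain q where q: "successively (\<lambda>x y. (x, y) \<in> E \<inter> V \<times> V) (last p # q)"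
        "last (last p # q) = s"
      by (rule rtrancl_imp_successively)
    have "successively (\<lambda>x y. (x, y) \<in> E) (last p # q)"
      using q(1) by (rule successively_mono) simp
    with p q insert.prems show ?case
      by (intro exI[of _ "p @ q"])
        (auto simp: successively_append_iff successively_Cons last_in_set split: if_splits)
  qed
  with that show ?thesis by blast
qed

fun convoy :: "'a list \<Rightarrow> 'a list list" where
  "convoy (a # b # p) = [a, b] # convoy (b # p)"
| "convoy _ = []"

lemma convoy_edge:
  "successively (\<lambda>x y. (x, y) \<in> E) p \<Longrightarrow> C \<in> set (convoy p) \<Longrightarrow> \<exists>a b. C = [a, b] \<and> (a, b) \<in> E"
  by (induction p rule: convoy.induct) auto

lemma successively_convoy:
  "successively (\<lambda>x y. (x, y) \<in> E) p \<Longrightarrow> successively (adjacent_conf E) (convoy p)"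
proof (induction p rule: convoy.induct)
  case (1 a b p)
  then show ?case by (cases p) (auto simp: adjacent_conf_iff_list_all2)
qed simp_all

lemma convoy_covers: "2 \<le> length p \<Longrightarrow> (\<Union>C\<in>set (convoy p). set C) = set p"
proof (induction p rule: convoy.induct)
  case (1 a b p)
  then show ?case by (cases p) auto
qed simp_all

lemma spanning_2_agent_walk_exists:
  assumes "connected_graph V E" "card V \<ge> 2"
  obtains W where "transition_walk V E 2 W" "spanning V W"
proof -
  have graph: "simple_graph V E" "finite V"
    using assms(1) by (auto simp: connected_graph_def simple_graph_def)
  moreover have "V \<noteq> {}"
    using assms(2) by auto
  ultimately obtain p where p: "successively (\<lambda>x y. (x, y) \<in> E) p" "V \<subseteq> set p"
    using connected_graph_covering_walk[OF assms(1)] by blast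
  have "2 \<le> card (set p)"
    using assms(2) card_mono[OF _ p(2)] by simp
  then have "2 \<le> length p"
    using card_length order_trans by blast
  then have "transition_walk V E 2 (convoy p)"
    using convoy_edge[OF p(1)] successively_convoy[OF p(1)]
    by (auto simp: transition_walk_iff configuration_2_iff[OF graph(1)] elim: convoy.elims)
  moreover have "spanning V (convoy p)"
    using convoy_covers[OF \<open>2 \<le> length p\<close>] p(2) by (auto simp: spanning_def)
  ultimately show ?thesis by (rule that)
qed

text \<open>\<open>map rev\<close> swaps the two agents, so that the single agent always continues
  with the agent it has just reached.\<close>

fun shuttle :: "'a list list \<Rightarrow> 'a list" where
  "shuttle [] = []"
| "shuttle (C # Cs) = C ! 0 # C ! 1 # shuttle (map rev Cs)"

lemma length_shuttle: "length (shuttle Cs) = 2 * length Cs"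
  by (induction Cs rule: shuttle.induct) simp_all

lemma set_shuttle:
  "\<forall>C\<in>set Cs. length C = 2 \<Longrightarrow> set (shuttle Cs) = (\<Union>C\<in>set Cs. set C)"
proof (induction Cs rule: shuttle.induct)
  case (2 C Cs)
  then have "set C = {C ! 0, C ! 1}"
    by (auto simp: numeral_2_eq_2 length_Suc_conv)
  with 2 show ?case by simp
qed simp

lemma successively_shuttle:
  assumes "sym E" "\<forall>C\<in>set Cs. \<exists>a b. C = [a, b] \<and> (a, b) \<in> E"
    "successively (adjacent_conf E) Cs"
  shows "successively (\<lambda>u v. adjacent_conf E [u] [v]) (shuttle Cs)"
  using assms(2,3)
proof (induction Cs rule: shuttle.induct)
  case (2 C Cs)
  from "2.prems" obtain a b where C: "C = [a, b]" "(a, b) \<in> E" by auto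
  have "\<forall>D\<in>set (map rev Cs). \<exists>a b. D = [a, b] \<and> (a, b) \<in> E"
    using "2.prems"(1) assms(1) by (fastforce dest: symD)
  moreover have "successively (adjacent_conf E) (map rev Cs)"
    using "2.prems"(2) by (auto simp: successively_map successively_Cons adjacent_conf_iff_list_all2
        elim!: successively_mono)
  ultimately have IH: "successively (\<lambda>u v. adjacent_conf E [u] [v]) (shuttle (map rev Cs))"
    by (rule "2.IH")
  show ?case
  proof (cases Cs)
    case (Cons D Ds)
    with "2.prems" obtain c d where "D = [c, d]" "adjacent_conf E C D" by auto
    with C Cons IH show ?thesis
      by (simp add: adjacent_conf_iff_list_all2)
  qed (simp add: C adjacent_conf_iff_list_all2)
qed simp

lemma shuttle_spanning_walk:
  assumes "simple_graph V E" "transition_walk V E 2 W" "spanning V W"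
  shows "transition_walk V E 1 (map (\<lambda>v. [v]) (shuttle W))"
    and "spanning V (map (\<lambda>v. [v]) (shuttle W))"
proof -
  have edges: "\<forall>C\<in>set W. \<exists>a b. C = [a, b] \<and> (a, b) \<in> E"
    using assms(2) by (simp add: transition_walk_iff configuration_2_iff[OF assms(1)])
  then have vertices: "set (shuttle W) = (\<Union>C\<in>set W. set C)"
    by (intro set_shuttle) auto
  have "sym E" "E \<subseteq> V \<times> V"
    using assms(1) by (simp_all add: simple_graph_def)
  with edges have "set (shuttle W) \<subseteq> V"
    unfolding vertices by fastforce
  moreover have "successively (\<lambda>u v. adjacent_conf E [u] [v]) (shuttle W)"
    using \<open>sym E\<close> edges assms(2) by (intro successively_shuttle) (simp_all add: transition_walk_iff)
  moreover have "shuttle W \<noteq> []"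
    using assms(2) length_shuttle[of W] by (auto simp: transition_walk_iff)
  ultimately show "transition_walk V E 1 (map (\<lambda>v. [v]) (shuttle W))"
    unfolding transition_walk_iff configuration_1_iff by (auto simp: successively_map)
  show "spanning V (map (\<lambda>v. [v]) (shuttle W))"
    using assms(3) vertices by (auto simp: spanning_def)
qed

theorem mainTheorem8:
  fixes V :: "'a set" and E :: "('a \<times> 'a) set"
  assumes "connected_graph V E" and "card V \<ge> 2"
  shows "h V E 1 \<le> 2 * h V E 2 + 1"
proof -
  have graph: "simple_graph V E"
    using assms(1) by (simp add: connected_graph_def)
  obtain W0 where "transition_walk V E 2 W0" "spanning V W0"
    using spanning_2_agent_walk_exists[OF assms] .
  then obtain W where W: "transition_walk V E 2 W" "spanning V W" "length W = Suc (h V E 2)"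
    by (rule h_attained)
  have "h V E 1 \<le> length (map (\<lambda>v. [v]) (shuttle W)) - 1"
    using shuttle_spanning_walk[OF graph W(1,2)] by (rule h_le_length)
  also have "\<dots> = 2 * h V E 2 + 1"
    using W(3) by (simp add: length_shuttle)
  finally show ?thesis .
qed

end
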